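(* Let $p,q,r$ be pairwise distinct primes with $p<q$ and $p<r$, and let $n$ be an integer with $1\le n<pqr$. For a finite sequence $(t_1,\dots,t_l)$ and $d\in\{0,1,2\}$ let $N_d(t_1,\dots,t_l)$ be the number of indices $i$ with $t_i=d$. Put $S_+=(F_n,F_{n-p-q},F_{n-q-r},F_{n-r-p})$ and $S_-=(F_{n-p},F_{n-q},F_{n-r},F_{n-p-q-r})$. Then $$a_{pqr}(n)-a_{pqr}(n-1)=\tfrac12\big(N_1(S_-)-N_1(S_+)\big)=N_0(S_+)-N_0(S_-)=N_2(S_+)-N_2(S_-).$$
   Context: $\Phi_{pqr}(x)=\prod_{0<k<pqr,\ \gcd(k,pqr)=1}(x-\zeta^k)$, $\zeta$ a primitive $pqr$-th root of unity, with coefficients $a_{pqr}(n)$ (zero outside $[0,\deg\Phi_{pqr}]$). For each integer $k$, let $a_k,b_k,c_k$ be the unique integers with $0\le a_k<p$, $0\le b_k<q$, $0\le c_k<r$ and $k\equiv a_kqr+b_krp+c_kpq \pmod{pqr}$, and define $F_k=\frac{a_k}{p}+\frac{b_k}{q}+\frac{c_k}{r}-\frac{k}{pqr}$. *)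

theory Defs
  imports Complex_Main "HOL-Computational_Algebra.Polynomial" "HOL-Number_Theory.Cong"
begin

definition cyclo :: "nat \<Rightarrow> complex poly" where
  "cyclo m = (\<Prod>k\<in>{k. 0 < k \<and> k < m \<and> coprime k m}. [:- ((cis (2 * pi / real m)) ^ k), 1:])"

definition cyc_coeff :: "nat \<Rightarrow> nat \<Rightarrow> complex" where
  "cyc_coeff m n = coeff (cyclo m) n"

definition abc :: "nat \<Rightarrow> nat \<Rightarrow> nat \<Rightarrow> int \<Rightarrow> int \<times> int \<times> int" where
  "abc p q r k = (THE (a, b, c). 0 \<le> a \<and> a < int p \<and> 0 \<le> b \<and> b < int q \<and> 0 \<le> c \<and> c < int r \<and>
      [k = a * int q * int r + b * int r * int p + c * int p * int q] (mod int (p * q * r)))"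

definition Fk :: "nat \<Rightarrow> nat \<Rightarrow> nat \<Rightarrow> int \<Rightarrow> real" where
  "Fk p q r k = (case abc p q r k of (a, b, c) \<Rightarrow>
      real_of_int a / real p + real_of_int b / real q + real_of_int c / real r
      - real_of_int k / real (p * q * r))"

definition Ncount :: "real \<Rightarrow> real list \<Rightarrow> nat" where
  "Ncount d ts = length (filter (\<lambda>t. t = d) ts)"

end

theory Submission
  imports Defs "HOL-Computational_Algebra.Fundamental_Theorem_Algebra"
begin

text \<open>
  The proof has three parts.
  (1) Comparing root multiplicities at the powers of \<open>\<zeta> = exp(2\<pi>i/pqr)\<close> (inclusion-exclusion
  over the prime divisors of the exponent) gives
  \<open>\<Phi>\<^sub>p\<^sub>q\<^sub>r (x\<^sup>q\<^sup>r - 1)(x\<^sup>r\<^sup>p - 1)(x\<^sup>p\<^sup>q - 1)(x - 1) = (x\<^sup>p\<^sup>q\<^sup>r - 1)(x\<^sup>p - 1)(x\<^sup>q - 1)(x\<^sup>r - 1)\<close>; multiplying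
  by three geometric sums turns this into \<open>\<Phi>\<^sub>p\<^sub>q\<^sub>r (x - 1)(x\<^sup>p\<^sup>q\<^sup>r - 1)\<^sup>2 = (x\<^sup>p - 1)(x\<^sup>q - 1)(x\<^sup>r - 1) U\<close>
  with \<open>U = \<Sum> x\<^bsup>i q r + j r p + l p q\<^esup>\<close> over \<open>i < p, j < q, l < r\<close>.  For \<open>0 < n < pqr\<close> the
  \<open>n\<close>-th coefficients give \<open>a(n) - a(n - 1)\<close> as an alternating sum of eight coefficients of \<open>U\<close>.
  (2) For pairwise coprime \<open>p, q, r\<close> every \<open>k\<close> has a unique digit triple \<open>(a\<^sub>k, b\<^sub>k, c\<^sub>k)\<close>, and
  \<open>F\<^sub>k = (a\<^sub>k q r + b\<^sub>k r p + c\<^sub>k p q - k) / pqr\<close> is an integer.  The coefficient of \<open>x\<^sup>k\<close> in \<open>U\<close> is 1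
  if \<open>F\<^sub>k = 0\<close> and 0 otherwise, \<open>F\<^sub>k \<in> {0, 1, 2}\<close> for the arguments occurring, and since each
  digit is periodic in \<open>k\<close>, the values of \<open>F\<close> on \<open>S\<^sub>+\<close> and \<open>S\<^sub>-\<close> have the same sum.
  (3) Two lists over \<open>{0, 1, 2}\<close> with equal length and sum differ equally in their numbers of
  0s and of 2s, and by minus twice that in their numbers of 1s.
\<close>

text \<open>The polynomial \<open>x\<^sup>e - 1\<close> has the \<open>e\<close>-th roots of unity as simple roots, hence factors as
  the product of the corresponding linear factors.\<close>

lemma rsquarefree_monom_minus_one:
  assumes "e > 0"
  shows "rsquarefree (monom (1::complex) e - 1)"
  unfolding rsquarefree_roots
proof (intro allI notI)
  fix z :: complex
  assume root: "poly (monom 1 e - 1) z = 0 \<and> poly (pderiv (monom 1 e - 1)) z = 0"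
  hence "z ^ e = 1" by (simp add: poly_monom)
  hence "z \<noteq> 0" using assms by (metis power_0_left zero_neq_one gr_implies_not0)
  moreover have "of_nat e * z ^ (e - 1) = 0"
    using root by (simp add: pderiv_monom poly_monom pderiv_diff)
  ultimately show False using assms by simp
qed

lemma monom_minus_one_root_product:
  assumes "e > 0"
  shows "monom (1::complex) e - 1 = (\<Prod>j<e. [:- cis (2 * pi * real j / real e), 1:])"
proof -
  let ?P = "monom (1::complex) e - 1"
  have "degree ?P = e"
    using assms degree_add_eq_left[of "- 1" "monom (1::complex) e"] by (simp add: degree_monom_eq)
  hence "lead_coeff ?P = 1"
    using assms by simp
  moreover have "{z. poly ?P z = 0} = {z. z ^ e = 1}"
    by (simp add: poly_monom)
  ultimately have "?P = (\<Prod>z | z ^ e = 1. [:-z, 1:])"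
    using complex_poly_decompose_rsquarefree[OF rsquarefree_monom_minus_one[OF assms]] by simp
  also have "\<dots> = (\<Prod>j<e. [:- cis (2 * pi * real j / real e), 1:])"
    using prod.reindex_bij_betw[OF bij_betw_roots_unity[OF assms], of "\<lambda>z. [:-z,1:]"] by simp
  finally show ?thesis .
qed

text \<open>A product over the elements of \<open>{..<m}\<close> satisfying \<open>P\<close>, written with indicator exponents
  so that products over different subsets of \<open>{..<m}\<close> can be multiplied termwise.\<close>

lemma prod_indicator_power:
  fixes g :: "nat \<Rightarrow> 'a::comm_monoid_mult"
  shows "(\<Prod>k<m. g k ^ of_bool (P k)) = (\<Prod>k\<in>{k. k < m \<and> P k}. g k)"
proof -
  have "(\<Prod>k<m. g k ^ of_bool (P k)) = (\<Prod>k<m. if P k then g k else 1)"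
    by (rule prod.cong) auto
  also have "\<dots> = prod g {k\<in>{..<m}. P k}"
    by (rule prod.inter_filter[symmetric]) simp
  finally show ?thesis by simp
qed

definition root_factor :: "nat \<Rightarrow> nat \<Rightarrow> complex poly" where
  "root_factor m k = [:- (cis (2 * pi / real m) ^ k), 1:]"

lemma monom_minus_one_divisor_product:
  assumes "m > 0" "s dvd m"
  shows "monom (1::complex) (m div s) - 1 = (\<Prod>k<m. root_factor m k ^ of_bool (s dvd k))"
proof -
  define e where "e = m div s"
  have m_eq: "m = s * e" and e_pos: "e > 0"
    using assms by (auto simp: e_def)
  have s_pos: "s > 0"
    using assms by (auto intro: Nat.gr0I)
  have multiples: "{k. k < m \<and> s dvd k} = (\<lambda>j. s * j) ` {..<e}"
    using s_pos by (auto simp: m_eq)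
  have "inj_on (\<lambda>j. s * j) {..<e}"
    using s_pos by (auto simp: inj_on_def)
  moreover have "root_factor m (s * j) = [:- cis (2 * pi * real j / real e), 1:]" for j
  proof -
    have "real (s * j) * (2 * pi / real m) = 2 * pi * real j / real e"
      using s_pos e_pos by (simp add: m_eq field_simps)
    thus ?thesis by (simp add: root_factor_def DeMoivre)
  qed
  ultimately have "(\<Prod>k\<in>{k. k < m \<and> s dvd k}. root_factor m k)
      = (\<Prod>j<e. [:- cis (2 * pi * real j / real e), 1:])"
    unfolding multiples by (simp add: prod.reindex)
  also have "\<dots> = monom 1 e - 1"
    by (rule monom_minus_one_root_product[OF e_pos, symmetric])
  finally show ?thesis
    by (simp add: prod_indicator_power e_def)
qed

lemma cyclo_indicator_product:
  assumes "m > 1"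
  shows "cyclo m = (\<Prod>k<m. root_factor m k ^ of_bool (coprime k m))"
proof -
  have "{k. 0 < k \<and> k < m \<and> coprime k m} = {k. k < m \<and> coprime k m}"
    using assms by (auto intro: Nat.gr0I)
  thus ?thesis
    by (simp add: cyclo_def prod_indicator_power root_factor_def)
qed

lemma coprime_three_primes_inclusion_exclusion:
  fixes p q r k :: nat
  assumes "prime p" "prime q" "prime r" "p \<noteq> q" "q \<noteq> r" "p \<noteq> r"
  shows "of_bool (coprime k (p * q * r)) + of_bool (p dvd k) + of_bool (q dvd k) + of_bool (r dvd k)
           + of_bool (p * q * r dvd k)
         = (1::nat) + of_bool (p * q dvd k) + of_bool (q * r dvd k) + of_bool (r * p dvd k)"
proof -
  have coprime_primes: "coprime x y" if "x \<in> {p, q, r}" "y \<in> {p, q, r}" "x \<noteq> y" for x y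
    using that assms primes_coprime by auto
  have dvd_coprime_mult: "x * y dvd k \<longleftrightarrow> x dvd k \<and> y dvd k" if "coprime x y" for x y
    using that by (auto intro: divides_mult dvd_mult_left dvd_mult_right)
  have pq: "p * q dvd k \<longleftrightarrow> p dvd k \<and> q dvd k" and "q * r dvd k \<longleftrightarrow> q dvd k \<and> r dvd k"
    and "r * p dvd k \<longleftrightarrow> r dvd k \<and> p dvd k"
    using dvd_coprime_mult coprime_primes assms by auto
  moreover have "coprime (p * q) r"
    using coprime_primes assms by (simp add: coprime_mult_left_iff)
  hence "p * q * r dvd k \<longleftrightarrow> p dvd k \<and> q dvd k \<and> r dvd k"
    using dvd_coprime_mult pq by auto
  moreover have "coprime k x \<longleftrightarrow> \<not> x dvd k" if "prime x" for x
    using that by (meson coprime_commute prime_imp_coprime not_prime_unit coprime_common_divisor dvd_refl)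
  hence "coprime k (p * q * r) \<longleftrightarrow> \<not> p dvd k \<and> \<not> q dvd k \<and> \<not> r dvd k"
    using assms(1-3) by (simp add: coprime_mult_right_iff)
  ultimately show ?thesis
    by auto
qed

text \<open>Comparing root multiplicities, the inclusion-exclusion count becomes a polynomial identity:
  \<open>\<Phi>\<^sub>p\<^sub>q\<^sub>r (x\<^sup>q\<^sup>r - 1)(x\<^sup>r\<^sup>p - 1)(x\<^sup>p\<^sup>q - 1)(x - 1) = (x\<^sup>p\<^sup>q\<^sup>r - 1)(x\<^sup>r - 1)(x\<^sup>p - 1)(x\<^sup>q - 1)\<close>.\<close>

lemma cyclo_three_primes_identity:
  fixes p q r :: nat
  assumes "prime p" "prime q" "prime r" "p \<noteq> q" "q \<noteq> r" "p \<noteq> r"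
  defines "m \<equiv> p * q * r"
  shows "cyclo m * (monom 1 (q * r) - 1) * (monom 1 (r * p) - 1) * (monom 1 (p * q) - 1)
           * (monom 1 1 - 1)
         = (monom 1 m - 1) * (monom 1 r - 1) * (monom 1 p - 1) * (monom 1 q - 1)"
proof -
  define f where "f = root_factor m"
  have pos: "p > 0" "q > 0" "r > 0"
    using assms prime_gt_0_nat by auto
  have "m > 1"
    using prime_gt_1_nat[OF assms(1)] prime_gt_1_nat[OF assms(2)] prime_gt_1_nat[OF assms(3)]
    unfolding m_def by (intro less_1_mult)
  have monom_product: "monom 1 (m div s) - 1 = (\<Prod>k<m. f k ^ of_bool (s dvd k))" if "s dvd m" for s
    using monom_minus_one_divisor_product \<open>m > 1\<close> that unfolding f_def by simp
  have quotients: "m div p = q * r" "m div q = r * p" "m div r = p * q" "m div m = 1"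
    "m div (q * r) = p" "m div (r * p) = q" "m div (p * q) = r" "m div 1 = m"
    unfolding m_def using pos by auto
  have divisors: "p dvd m" "q dvd m" "r dvd m" "q * r dvd m" "r * p dvd m" "p * q dvd m"
    unfolding m_def by auto
  have "cyclo m * (monom 1 (q * r) - 1) * (monom 1 (r * p) - 1) * (monom 1 (p * q) - 1)
          * (monom 1 1 - 1)
        = (\<Prod>k<m. f k ^ (of_bool (coprime k m) + of_bool (p dvd k) + of_bool (q dvd k)
             + of_bool (r dvd k) + of_bool (m dvd k)))"
    using monom_product[of p] monom_product[of q] monom_product[of r] monom_product[of m]
      divisors quotients cyclo_indicator_product[OF \<open>m > 1\<close>]
    by (simp add: f_def prod.distrib[symmetric] power_add)
  also have "\<dots> = (\<Prod>k<m. f k ^ (1 + of_bool (p * q dvd k) + of_bool (q * r dvd k)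
             + of_bool (r * p dvd k)))"
    using coprime_three_primes_inclusion_exclusion[OF assms(1-6)] unfolding m_def by simp
  also have "\<dots> = (monom 1 m - 1) * (monom 1 r - 1) * (monom 1 p - 1) * (monom 1 q - 1)"
    using monom_product[of 1] monom_product[of "p * q"] monom_product[of "q * r"]
      monom_product[of "r * p"] divisors quotients
    by (simp add: prod.distrib[symmetric] power_add mult_ac)
  finally show ?thesis .
qed

lemma monom_geometric_sum:
  "(monom (1::'a::comm_ring_1) a - 1) * (\<Sum>i<n. monom 1 (i * a)) = monom 1 (n * a) - 1"
proof (induction n)
  case 0
  thus ?case by simp
next
  case (Suc n)
  have "(monom (1::'a) a - 1) * (\<Sum>i<Suc n. monom 1 (i * a))
      = (monom 1 a - 1) * (\<Sum>i<n. monom 1 (i * a)) + (monom 1 a - 1) * monom 1 (n * a)"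
    by (simp add: algebra_simps)
  also have "\<dots> = monom 1 (n * a) - 1 + (monom 1 a - 1) * monom 1 (n * a)"
    by (simp only: Suc.IH)
  also have "\<dots> = monom 1 (Suc n * a) - 1"
    by (simp add: algebra_simps mult_monom)
  finally show ?case .
qed

definition digit_poly :: "nat \<Rightarrow> nat \<Rightarrow> nat \<Rightarrow> 'a::comm_semiring_1 poly" where
  "digit_poly p q r = (\<Sum>i<p. monom 1 (i * (q * r))) * (\<Sum>j<q. monom 1 (j * (r * p)))
                        * (\<Sum>l<r. monom 1 (l * (p * q)))"

text \<open>Multiplying the identity for \<open>\<Phi>\<^sub>p\<^sub>q\<^sub>r\<close> by the three geometric sums and cancelling one factor
  \<open>x\<^sup>p\<^sup>q\<^sup>r - 1\<close>.\<close>

lemma cyclo_times_square: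
  fixes p q r :: nat
  assumes "prime p" "prime q" "prime r" "p \<noteq> q" "q \<noteq> r" "p \<noteq> r"
  defines "m \<equiv> p * q * r"
  shows "cyclo m * (monom 1 1 - 1) * (monom 1 m - 1) ^ 2
         = (monom 1 p - 1) * (monom 1 q - 1) * (monom 1 r - 1) * digit_poly p q r"
proof -
  define G where "G a b = (\<Sum>i<a. monom (1::complex) (i * b))" for a b
  have "m > 0"
    using assms prime_gt_0_nat unfolding m_def by simp
  have nonzero: "monom (1::complex) m - 1 \<noteq> 0"
  proof
    assume "monom (1::complex) m - 1 = 0"
    hence "coeff (monom (1::complex) m - 1) 0 = 0" by simp
    thus False using \<open>m > 0\<close> by simp
  qed
  have "(monom 1 m - 1) ^ 3
      = ((monom 1 (q * r) - 1) * G p (q * r)) * ((monom 1 (r * p) - 1) * G q (r * p))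
          * ((monom 1 (p * q) - 1) * G r (p * q))"
    unfolding G_def monom_geometric_sum m_def by (simp add: mult_ac power3_eq_cube)
  hence "(monom 1 m - 1) * (cyclo m * (monom 1 1 - 1) * (monom 1 m - 1) ^ 2)
      = cyclo m * (monom 1 (q * r) - 1) * (monom 1 (r * p) - 1) * (monom 1 (p * q) - 1)
          * (monom 1 1 - 1) * digit_poly p q r"
    unfolding digit_poly_def G_def by (simp add: power3_eq_cube power2_eq_square mult_ac)
  also have "\<dots> = (monom 1 m - 1) * ((monom 1 p - 1) * (monom 1 q - 1) * (monom 1 r - 1)
                      * digit_poly p q r)"
    using cyclo_three_primes_identity[OF assms(1-6)] unfolding m_def by (simp add: mult_ac)
  finally show ?thesis
    using nonzero by simp
qed

definition coeff_int :: "'a::zero poly \<Rightarrow> int \<Rightarrow> 'a" where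
  "coeff_int P k = (if k < 0 then 0 else coeff P (nat k))"

lemma coeff_monom_mult_int:
  "coeff (monom (1::'a::comm_semiring_1) s * P) n = coeff_int P (int n - int s)"
  by (simp add: coeff_monom_mult coeff_int_def nat_diff_distrib)

lemma coeff_times_square_low:
  fixes P :: "'a::comm_ring_1 poly"
  assumes "0 < n" "n < m"
  shows "coeff (P * (monom 1 1 - 1) * (monom 1 m - 1) ^ 2) n = coeff P (n - 1) - coeff P n"
proof -
  have "P * (monom 1 1 - 1) * (monom 1 m - 1) ^ 2
        = monom 1 m * (P * (monom 1 1 - 1) * (monom 1 m - 2)) + (monom 1 1 * P - P)"
    by (simp add: power2_eq_square algebra_simps mult_monom flip: mult_2)
  thus ?thesis
    using assms by (simp add: coeff_monom_mult)
qed

lemma coeff_three_binomials: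
  fixes U :: "'a::comm_ring_1 poly"
  shows "coeff ((monom 1 a - 1) * (monom 1 b - 1) * (monom 1 c - 1) * U) n
    = coeff_int U (int n - a - b - c) - coeff_int U (int n - a - b) - coeff_int U (int n - b - c)
      - coeff_int U (int n - c - a) + coeff_int U (int n - a) + coeff_int U (int n - b)
      + coeff_int U (int n - c) - coeff_int U (int n)"
proof -
  have "(monom 1 a - 1) * (monom 1 b - 1) * (monom 1 c - 1) * U
    = monom 1 (a + b + c) * U - monom 1 (a + b) * U - monom 1 (b + c) * U - monom 1 (c + a) * U
      + monom 1 a * U + monom 1 b * U + monom 1 c * U - monom 1 0 * U"
    by (simp add: algebra_simps mult_monom)
  thus ?thesis
    by (simp only: coeff_diff coeff_add coeff_monom_mult_int) (simp add: algebra_simps)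
qed

definition digit_sum :: "nat \<Rightarrow> nat \<Rightarrow> nat \<Rightarrow> nat \<times> nat \<times> nat \<Rightarrow> nat" where
  "digit_sum p q r t = (case t of (i, j, l) \<Rightarrow> i * (q * r) + j * (r * p) + l * (p * q))"

lemma digit_poly_as_sum:
  "digit_poly p q r = (\<Sum>t\<in>{..<p} \<times> {..<q} \<times> {..<r}. monom 1 (digit_sum p q r t))"
  unfolding digit_poly_def mult.assoc
  by (simp only: sum_product sum.cartesian_product)
     (simp add: mult_monom digit_sum_def add.assoc case_prod_unfold)

lemma coeff_digit_poly:
  "coeff (digit_poly p q r) n
     = of_nat (card {t\<in>{..<p} \<times> {..<q} \<times> {..<r}. digit_sum p q r t = n})"
proof -
  have "coeff (digit_poly p q r) n
        = (\<Sum>t\<in>{..<p} \<times> {..<q} \<times> {..<r}. if digit_sum p q r t = n then 1 else 0)"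
    unfolding digit_poly_as_sum coeff_sum by (simp add: coeff_monom)
  also have "\<dots> = (\<Sum>t\<in>{t\<in>{..<p} \<times> {..<q} \<times> {..<r}. digit_sum p q r t = n}. 1)"
    by (rule sum.inter_filter[symmetric]) simp
  finally show ?thesis by simp
qed

lemma unique_digit:
  fixes u P k :: int
  assumes "P > 0" "coprime u P"
  shows "\<exists>!a. 0 \<le> a \<and> a < P \<and> [k = a * u] (mod P)"
proof (rule ex_ex1I)
  obtain x where x: "[u * x = 1] (mod P)"
    using cong_solve_coprime_int[OF assms(2)] by blast
  have "[(k * x) mod P * u = k * (u * x)] (mod P)"
    by (metis cong_mod_left cong_refl cong_scalar_right mult.assoc mult.commute)
  also have "[k * (u * x) = k * 1] (mod P)"
    using x by (rule cong_scalar_left)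
  finally show "\<exists>a. 0 \<le> a \<and> a < P \<and> [k = a * u] (mod P)"
    using assms(1) by (intro exI[of _ "(k * x) mod P"]) (simp add: cong_sym)
next
  fix a a'
  assume "0 \<le> a \<and> a < P \<and> [k = a * u] (mod P)" "0 \<le> a' \<and> a' < P \<and> [k = a' * u] (mod P)"
  moreover from this have "[a = a'] (mod P)"
    using cong_mult_rcancel[OF assms(2)] by (meson cong_sym cong_trans)
  ultimately show "a = a'"
    by (meson cong_less_imp_eq_int)
qed

locale coprime_triple =
  fixes p q r :: nat
  assumes pos: "p > 0" "q > 0" "r > 0"
    and coprime_pairs: "coprime p q" "coprime q r" "coprime r p"
begin

definition digit_value :: "int \<times> int \<times> int \<Rightarrow> int" where
  "digit_value t = (case t of (a, b, c) \<Rightarrow> a * (int q * int r) + b * (int r * int p) + c * (int p * int q))"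

definition digit_box :: "(int \<times> int \<times> int) set" where
  "digit_box = {0..<int p} \<times> {0..<int q} \<times> {0..<int r}"

lemma coprime_cofactors:
  "coprime (int q * int r) (int p)" "coprime (int r * int p) (int q)" "coprime (int p * int q) (int r)"
  using coprime_pairs by (simp_all add: coprime_mult_left_iff coprime_commute)

lemma cong_pqr_iff:
  "[x = y] (mod int (p * q * r)) \<longleftrightarrow>
     [x = y] (mod int p) \<and> [x = y] (mod int q) \<and> [x = y] (mod int r)"
proof
  assume "[x = y] (mod int (p * q * r))"
  thus "[x = y] (mod int p) \<and> [x = y] (mod int q) \<and> [x = y] (mod int r)"
    by (metis cong_modulus_mult mult.commute mult.assoc of_nat_mult)
next
  assume "[x = y] (mod int p) \<and> [x = y] (mod int q) \<and> [x = y] (mod int r)"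
  moreover have "coprime (int p) (int q)" "coprime (int p * int q) (int r)"
    using coprime_pairs by (simp_all add: coprime_mult_left_iff coprime_commute)
  ultimately show "[x = y] (mod int (p * q * r))"
    by (simp add: coprime_cong_mult)
qed

text \<open>Modulo each factor only one term of the digit value survives.\<close>

lemma cong_digit_value_iff:
  "[k = digit_value (a, b, c)] (mod int (p * q * r)) \<longleftrightarrow>
     [k = a * (int q * int r)] (mod int p) \<and> [k = b * (int r * int p)] (mod int q)
     \<and> [k = c * (int p * int q)] (mod int r)"
proof -
  have "[digit_value (a, b, c) = a * (int q * int r)] (mod int p)"
    "[digit_value (a, b, c) = b * (int r * int p)] (mod int q)"
    "[digit_value (a, b, c) = c * (int p * int q)] (mod int r)"
    unfolding digit_value_def by (simp_all add: cong_iff_dvd_diff)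
  thus ?thesis
    unfolding cong_pqr_iff by (meson cong_sym cong_trans)
qed

lemma digits_exist_unique:
  "\<exists>!t. t \<in> digit_box \<and> [k = digit_value t] (mod int (p * q * r))"
proof -
  obtain a where a: "0 \<le> a \<and> a < int p \<and> [k = a * (int q * int r)] (mod int p)"
    and a_unique: "\<And>a'. 0 \<le> a' \<and> a' < int p \<and> [k = a' * (int q * int r)] (mod int p) \<Longrightarrow> a' = a"
    using unique_digit[OF _ coprime_cofactors(1), of k] pos by auto
  obtain b where b: "0 \<le> b \<and> b < int q \<and> [k = b * (int r * int p)] (mod int q)"
    and b_unique: "\<And>b'. 0 \<le> b' \<and> b' < int q \<and> [k = b' * (int r * int p)] (mod int q) \<Longrightarrow> b' = b"
    using unique_digit[OF _ coprime_cofactors(2), of k] pos by auto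
  obtain c where c: "0 \<le> c \<and> c < int r \<and> [k = c * (int p * int q)] (mod int r)"
    and c_unique: "\<And>c'. 0 \<le> c' \<and> c' < int r \<and> [k = c' * (int p * int q)] (mod int r) \<Longrightarrow> c' = c"
    using unique_digit[OF _ coprime_cofactors(3), of k] pos by auto
  show ?thesis
  proof (rule ex1I[of _ "(a, b, c)"])
    show "(a, b, c) \<in> digit_box \<and> [k = digit_value (a, b, c)] (mod int (p * q * r))"
      using a b c cong_digit_value_iff[of k a b c] by (simp add: digit_box_def)
  next
    fix t
    assume "t \<in> digit_box \<and> [k = digit_value t] (mod int (p * q * r))"
    thus "t = (a, b, c)"
      using a_unique b_unique c_unique cong_digit_value_iff[of k]
      by (cases t) (simp add: digit_box_def)
  qed
qed

lemma abc_eq_The: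
  "abc p q r k = (THE t. t \<in> digit_box \<and> [k = digit_value t] (mod int (p * q * r)))"
  unfolding abc_def digit_box_def digit_value_def
  by (rule arg_cong[where f = The]) (auto simp: mult.assoc split: prod.splits)

lemma abc_in_box: "abc p q r k \<in> digit_box"
  and abc_cong: "[k = digit_value (abc p q r k)] (mod int (p * q * r))"
  using theI'[OF digits_exist_unique[of k]] unfolding abc_eq_The by auto

lemma abc_eqI:
  assumes "t \<in> digit_box" "[k = digit_value t] (mod int (p * q * r))"
  shows "abc p q r k = t"
  using digits_exist_unique[of k] abc_in_box abc_cong assms by blast

definition F :: "int \<Rightarrow> int" where
  "F k = (digit_value (abc p q r k) - k) div int (p * q * r)"

lemma digit_value_abc: "digit_value (abc p q r k) = k + int (p * q * r) * F k"
  using abc_cong[of k] unfolding F_def by (simp add: cong_iff_dvd_diff dvd_diff_commute)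

lemma Fk_eq_F: "Fk p q r k = of_int (F k)"
proof -
  obtain a b c where abc: "abc p q r k = (a, b, c)"
    by (cases "abc p q r k")
  have "Fk p q r k = (of_int (digit_value (abc p q r k)) - of_int k) / real (p * q * r)"
    unfolding Fk_def abc digit_value_def using pos by (simp add: field_simps)
  also have "\<dots> = of_int (F k)"
    unfolding digit_value_abc using pos by simp
  finally show ?thesis .
qed

lemma digit_value_bounds:
  assumes "t \<in> digit_box"
  shows "0 \<le> digit_value t"
    and "digit_value t \<le> 3 * int (p * q * r) - int (q * r) - int (r * p) - int (p * q)"
proof -
  obtain a b c where t: "t = (a, b, c)" and bounds: "0 \<le> a" "a \<le> int p - 1" "0 \<le> b"
      "b \<le> int q - 1" "0 \<le> c" "c \<le> int r - 1"
    using assms unfolding digit_box_def by (cases t) auto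
  show "0 \<le> digit_value t"
    unfolding t digit_value_def using bounds by simp
  have "a * (int q * int r) \<le> (int p - 1) * (int q * int r)"
    "b * (int r * int p) \<le> (int q - 1) * (int r * int p)"
    "c * (int p * int q) \<le> (int r - 1) * (int p * int q)"
    using bounds by (intro mult_right_mono; simp)+
  thus "digit_value t \<le> 3 * int (p * q * r) - int (q * r) - int (r * p) - int (p * q)"
    unfolding t digit_value_def by (simp add: algebra_simps)
qed

lemma F_range:
  assumes "1 - int p - int q - int r \<le> k" "k < int (p * q * r)"
  shows "F k \<in> {0, 1, 2}"
proof -
  define M where "M = int (p * q * r)"
  have "M > 0"
    using pos by (simp add: M_def)
  have "int q \<le> int (p * q)" "int r \<le> int (q * r)" "int p \<le> int (r * p)"
    using pos by simp_all
  hence "M * (-1) < M * F k" "M * F k < M * 3"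
    using digit_value_abc[of k] digit_value_bounds[OF abc_in_box, of k] assms
    unfolding M_def by linarith+
  hence "-1 < F k" "F k < 3"
    using \<open>M > 0\<close> mult_less_cancel_left_pos by blast+
  thus ?thesis by auto
qed

lemma digit_value_eq_iff:
  assumes "t \<in> digit_box"
  shows "digit_value t = k \<longleftrightarrow> t = abc p q r k \<and> F k = 0"
proof
  assume "digit_value t = k"
  hence "abc p q r k = t"
    using assms by (intro abc_eqI) auto
  thus "t = abc p q r k \<and> F k = 0"
    using digit_value_abc[of k] pos \<open>digit_value t = k\<close> by simp
qed (use digit_value_abc in simp)

lemma coeff_int_digit_poly: "coeff_int (digit_poly p q r) k = of_bool (F k = 0)"
proof (cases "k < 0")
  case True
  have "F k \<noteq> 0"
    using digit_value_abc[of k] digit_value_bounds(1)[OF abc_in_box[of k]] True by auto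
  thus ?thesis
    using True by (simp add: coeff_int_def)
next
  case False
  define box where "box = {..<p} \<times> {..<q} \<times> {..<r}"
  define t where "t = map_prod nat (map_prod nat nat) (abc p q r k)"
  have t_int: "(int (fst t), int (fst (snd t)), int (snd (snd t))) = abc p q r k"
    using abc_in_box[of k] unfolding t_def digit_box_def by (auto simp: map_prod_def split: prod.splits)
  have in_box_iff: "(int i, int j, int l) \<in> digit_box \<longleftrightarrow> (i, j, l) \<in> box" for i j l
    by (simp add: digit_box_def box_def)
  have solutions: "{s\<in>box. digit_sum p q r s = nat k} = (if F k = 0 then {t} else {})"
  proof -
    have "digit_sum p q r (i, j, l) = nat k \<longleftrightarrow> (i, j, l) = t \<and> F k = 0"
      if "(i, j, l) \<in> box" for i j l
    proof -
      have int_digit_sum: "int (digit_sum p q r (i, j, l)) = digit_value (int i, int j, int l)"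
        by (simp add: digit_sum_def digit_value_def)
      have "digit_sum p q r (i, j, l) = nat k \<longleftrightarrow> digit_value (int i, int j, int l) = k"
        using False by (auto simp flip: int_digit_sum)
      also have "\<dots> \<longleftrightarrow> (int i, int j, int l) = abc p q r k \<and> F k = 0"
        using that in_box_iff by (intro digit_value_eq_iff) simp
      finally show ?thesis
        using t_int by (auto simp: prod_eq_iff)
    qed
    moreover have "t \<in> box"
      using abc_in_box[of k] in_box_iff t_int by (metis prod.collapse)
    ultimately show ?thesis
      by auto
  qed
  show ?thesis
    using False by (simp add: coeff_int_def coeff_digit_poly flip: box_def) (simp add: solutions)
qed

lemma abc_periodic:
  shows "[k = k'] (mod int p) \<Longrightarrow> fst (abc p q r k) = fst (abc p q r k')"
    and "[k = k'] (mod int q) \<Longrightarrow> fst (snd (abc p q r k)) = fst (snd (abc p q r k'))"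
    and "[k = k'] (mod int r) \<Longrightarrow> snd (snd (abc p q r k)) = snd (snd (abc p q r k'))"
proof -
  have digit_eq: "d k = d k'"
    if "[k = k'] (mod P)" "coprime u P" "\<And>k. 0 \<le> d k \<and> d k < P" "\<And>k. [k = d k * u] (mod P)"
    for P u :: int and d :: "int \<Rightarrow> int"
  proof -
    have "[d k * u = d k' * u] (mod P)"
      using that(1,4) by (meson cong_sym cong_trans)
    hence "[d k = d k'] (mod P)"
      using cong_mult_rcancel[OF that(2)] by blast
    thus ?thesis
      using that(3) cong_less_imp_eq_int by blast
  qed
  have digits: "0 \<le> fst (abc p q r k) \<and> fst (abc p q r k) < int p"
    "0 \<le> fst (snd (abc p q r k)) \<and> fst (snd (abc p q r k)) < int q"
    "0 \<le> snd (snd (abc p q r k)) \<and> snd (snd (abc p q r k)) < int r"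
    "[k = fst (abc p q r k) * (int q * int r)] (mod int p)"
    "[k = fst (snd (abc p q r k)) * (int r * int p)] (mod int q)"
    "[k = snd (snd (abc p q r k)) * (int p * int q)] (mod int r)" for k
    using abc_in_box[of k] abc_cong[of k] cong_digit_value_iff[of k]
    by (auto simp: digit_box_def split: prod.splits)
  show "[k = k'] (mod int p) \<Longrightarrow> fst (abc p q r k) = fst (abc p q r k')"
    using digit_eq[OF _ coprime_cofactors(1), where d = "\<lambda>k. fst (abc p q r k)"] digits(1,4) by blast
  show "[k = k'] (mod int q) \<Longrightarrow> fst (snd (abc p q r k)) = fst (snd (abc p q r k'))"
    using digit_eq[OF _ coprime_cofactors(2), where d = "\<lambda>k. fst (snd (abc p q r k))"] digits(2,5) by blast
  show "[k = k'] (mod int r) \<Longrightarrow> snd (snd (abc p q r k)) = snd (snd (abc p q r k'))"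
    using digit_eq[OF _ coprime_cofactors(3), where d = "\<lambda>k. snd (snd (abc p q r k))"] digits(3,6) by blast
qed

text \<open>The balance identity between the entries of \<open>S\<^sub>+\<close> and \<open>S\<^sub>-\<close>: by periodicity the digits on the two sides
  agree in pairs, and the arguments have the same sum.\<close>

lemma F_balance:
  "F n + F (n - p - q) + F (n - q - r) + F (n - r - p)
     = F (n - p) + F (n - q) + F (n - r) + F (n - p - q - r)"
proof -
  define a where "a k = fst (abc p q r k)" for k
  define b where "b k = fst (snd (abc p q r k))" for k
  define c where "c k = snd (snd (abc p q r k))" for k
  have representation: "k + int (p * q * r) * F k = a k * (int q * int r) + b k * (int r * int p)
                 + c k * (int p * int q)" for k
    unfolding a_def b_def c_def digit_value_abc[symmetric] digit_value_def
    by (simp split: prod.split)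
  have "a (n - p) = a n" "a (n - p - q) = a (n - q)"
    "a (n - r - p) = a (n - r)" "a (n - p - q - r) = a (n - q - r)"
    unfolding a_def by (rule abc_periodic; simp add: cong_iff_dvd_diff)+
  moreover have "b (n - q) = b n" "b (n - p - q) = b (n - p)"
    "b (n - q - r) = b (n - r)" "b (n - p - q - r) = b (n - r - p)"
    unfolding b_def by (rule abc_periodic; simp add: cong_iff_dvd_diff)+
  moreover have "c (n - r) = c n" "c (n - q - r) = c (n - q)"
    "c (n - r - p) = c (n - p)" "c (n - p - q - r) = c (n - p - q)"
    unfolding c_def by (rule abc_periodic; simp add: cong_iff_dvd_diff)+
  ultimately have "int (p * q * r) * (F n + F (n - p - q) + F (n - q - r) + F (n - r - p))
      = int (p * q * r) * (F (n - p) + F (n - q) + F (n - r) + F (n - p - q - r))"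
    using representation[of n] representation[of "n - p"] representation[of "n - q"]
      representation[of "n - r"] representation[of "n - p - q"] representation[of "n - q - r"]
      representation[of "n - r - p"] representation[of "n - p - q - r"]
    by (simp add: algebra_simps)
  thus ?thesis
    using pos by simp
qed

end

text \<open>The coefficient differences of \<open>\<Phi>\<^sub>p\<^sub>q\<^sub>r\<close> below its period, read off from
  \<open>\<Phi>\<^sub>p\<^sub>q\<^sub>r (x - 1)(x\<^sup>p\<^sup>q\<^sup>r - 1)\<^sup>2 = (x\<^sup>p - 1)(x\<^sup>q - 1)(x\<^sup>r - 1) \<cdot> digit_poly p q r\<close>.\<close>

lemma cyc_coeff_difference:
  fixes p q r n :: nat
  assumes "prime p" "prime q" "prime r" "p \<noteq> q" "q \<noteq> r" "p \<noteq> r"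
    and "1 \<le> n" "n < p * q * r"
  defines "u \<equiv> coeff_int (digit_poly p q r :: complex poly)"
  shows "cyc_coeff (p * q * r) n - cyc_coeff (p * q * r) (n - 1)
         = u (int n) - u (int n - p) - u (int n - q) - u (int n - r) + u (int n - p - q)
           + u (int n - q - r) + u (int n - r - p) - u (int n - p - q - r)"
proof -
  have "cyc_coeff (p * q * r) (n - 1) - cyc_coeff (p * q * r) n
        = coeff (cyclo (p * q * r) * (monom 1 1 - 1) * (monom 1 (p * q * r) - 1) ^ 2) n"
    unfolding cyc_coeff_def using assms(7,8) by (intro coeff_times_square_low[symmetric]) auto
  also have "\<dots> = coeff ((monom 1 p - 1) * (monom 1 q - 1) * (monom 1 r - 1) * digit_poly p q r) n"
    by (simp only: cyclo_times_square[OF assms(1-6)])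
  also have "\<dots> = u (int n - p - q - r) - u (int n - p - q) - u (int n - q - r) - u (int n - r - p)
                   + u (int n - p) + u (int n - q) + u (int n - r) - u (int n)"
    unfolding u_def by (rule coeff_three_binomials)
  finally show ?thesis
    by (simp add: algebra_simps)
qed

lemma Ncount_length_sum:
  assumes "set xs \<subseteq> {0, 1, 2}"
  shows "real (Ncount 0 xs) + real (Ncount 1 xs) + real (Ncount 2 xs) = real (length xs)"
    and "sum_list xs = real (Ncount 1 xs) + 2 * real (Ncount 2 xs)"
  using assms by (induction xs) (auto simp: Ncount_def)

lemma balanced_lists_counts:
  assumes "set xs \<subseteq> {0, 1, 2}" "set ys \<subseteq> {0, 1, 2}"
    and "length xs = length ys" "sum_list xs = sum_list ys"
  shows "(real (Ncount 1 ys) - real (Ncount 1 xs)) / 2 = real (Ncount 0 xs) - real (Ncount 0 ys)"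
    and "int (Ncount 2 xs) - int (Ncount 2 ys) = int (Ncount 0 xs) - int (Ncount 0 ys)"
proof -
  have "real (length xs) = real (length ys)"
    using assms(3) by simp
  note counts = Ncount_length_sum[OF assms(1)] Ncount_length_sum[OF assms(2)] this assms(4)
  show "(real (Ncount 1 ys) - real (Ncount 1 xs)) / 2 = real (Ncount 0 xs) - real (Ncount 0 ys)"
    using counts by (simp add: field_simps)
  have "real (Ncount 2 xs) - real (Ncount 2 ys) = real (Ncount 0 xs) - real (Ncount 0 ys)"
    using counts by linarith
  thus "int (Ncount 2 xs) - int (Ncount 2 ys) = int (Ncount 0 xs) - int (Ncount 0 ys)"
    by linarith
qed

theorem lemma6:
  fixes p q r n :: nat
  assumes "prime p" "prime q" "prime r"
    and "p \<noteq> q" "q \<noteq> r" "p \<noteq> r"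
    and "p < q" "p < r"
    and "1 \<le> n" "n < p * q * r"
  defines "Splus \<equiv> [Fk p q r (int n), Fk p q r (int n - int p - int q),
                     Fk p q r (int n - int q - int r), Fk p q r (int n - int r - int p)]"
    and "Sminus \<equiv> [Fk p q r (int n - int p), Fk p q r (int n - int q),
                     Fk p q r (int n - int r), Fk p q r (int n - int p - int q - int r)]"
  shows "cyc_coeff (p * q * r) n - cyc_coeff (p * q * r) (n - 1)
           = complex_of_real ((real (Ncount 1 Sminus) - real (Ncount 1 Splus)) / 2)
    \<and> cyc_coeff (p * q * r) n - cyc_coeff (p * q * r) (n - 1)
           = of_int (int (Ncount 0 Splus) - int (Ncount 0 Sminus))
    \<and> cyc_coeff (p * q * r) n - cyc_coeff (p * q * r) (n - 1)
           = of_int (int (Ncount 2 Splus) - int (Ncount 2 Sminus))"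
proof -
  interpret coprime_triple p q r
    using assms(1-6) prime_gt_0_nat primes_coprime by unfold_locales auto
  define ks_plus where "ks_plus = [int n, int n - p - q, int n - q - r, int n - r - p]"
  define ks_minus where "ks_minus = [int n - p, int n - q, int n - r, int n - p - q - r]"
  have lists: "Splus = map (\<lambda>k. of_int (F k)) ks_plus" "Sminus = map (\<lambda>k. of_int (F k)) ks_minus"
    unfolding Splus_def Sminus_def ks_plus_def ks_minus_def by (simp_all add: Fk_eq_F)
  have "int n < int (p * q * r)"
    using assms(10) by linarith
  hence "1 - int p - int q - int r \<le> k \<and> k < int (p * q * r)" if "k \<in> set ks_plus \<union> set ks_minus" for k
    using that assms(9) unfolding ks_plus_def ks_minus_def by auto
  hence "real_of_int (F k) \<in> {0, 1, 2}" if "k \<in> set ks_plus \<union> set ks_minus" for k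
    using F_range that by fastforce
  hence "set Splus \<subseteq> {0, 1, 2}" "set Sminus \<subseteq> {0, 1, 2}"
    unfolding lists set_map by blast+
  moreover have "length Splus = length Sminus"
    by (simp add: Splus_def Sminus_def)
  moreover have "sum_list Splus = sum_list Sminus"
    using arg_cong[OF F_balance[of "int n"], of real_of_int]
    unfolding lists ks_plus_def ks_minus_def by simp
  ultimately have counts:
    "(real (Ncount 1 Sminus) - real (Ncount 1 Splus)) / 2 = real (Ncount 0 Splus) - real (Ncount 0 Sminus)"
    "int (Ncount 2 Splus) - int (Ncount 2 Sminus) = int (Ncount 0 Splus) - int (Ncount 0 Sminus)"
    by (rule balanced_lists_counts)+
  have "cyc_coeff (p * q * r) n - cyc_coeff (p * q * r) (n - 1)
        = of_int (int (Ncount 0 Splus) - int (Ncount 0 Sminus))"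
    unfolding cyc_coeff_difference[OF assms(1-6,9,10)] coeff_int_digit_poly lists
      ks_plus_def ks_minus_def
    by (simp add: Ncount_def algebra_simps)
  with counts show ?thesis
    by (metis of_int_of_nat_eq of_int_diff of_real_diff of_real_of_nat_eq of_real_of_int_eq)
qed

end
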